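(* For all integers $n\ge1$ and $r\ge1$: (a) $\displaystyle\sum_{k=1}^{n}\bigl(2^{\tau(k)}-1\bigr)\omega(n-k)=\sum_{\substack{m+k=n\\ m\ge1,\ k\ge0}}\Phi^\tau(m)\,\Omega_m(k)$; (b) $\displaystyle\sum_{k=1}^{n}\binom{\tau(k)}{r}\omega(n-k)=\sum_{\substack{m+k=n\\ m\ge1,\ k\ge0}}\Phi^\tau_r(m)\,\Omega_m(k)$.
   Context: $\tau(n)$ is the number of positive divisors of $n$. $\Phi^\tau(n)$ is the number of nonempty subsets $S$ of the set of positive divisors of $n$ such that $\gcd(\gcd(S),n)=1$, and $\Phi^\tau_r(n)$ is the number of such subsets of cardinality $r$. $\omega:\mathbb{Z}\to\mathbb{Z}$ is defined by $\omega(0)=1$; $\omega(m)=(-1)^j$ if $m=\frac{3j^2\pm j}{2}$ for some integer $j\ge1$; $\omega(m)=0$ otherwise (in particular for $m<0$). For $m\ge1$ and integer $k$, $\Omega_m(k)=\sum_{j\ge0}\omega(k-jm)=\omega(k)+\omega(k-m)+\omega(k-2m)+\cdots$. *)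

theory Defs
  imports Main
begin

definition divisors_set :: "nat \<Rightarrow> nat set" where
  "divisors_set n = {d. d dvd n}"

definition tau :: "nat \<Rightarrow> nat" where
  "tau n = card (divisors_set n)"

definition Phi_tau :: "nat \<Rightarrow> nat" where
  "Phi_tau n = card {S. S \<subseteq> divisors_set n \<and> S \<noteq> {} \<and> gcd (Gcd S) n = 1}"

definition Phi_tau_r :: "nat \<Rightarrow> nat \<Rightarrow> nat" where
  "Phi_tau_r r n = card {S. S \<subseteq> divisors_set n \<and> S \<noteq> {} \<and> gcd (Gcd S) n = 1 \<and> card S = r}"

definition pent_omega :: "int \<Rightarrow> int" where
  "pent_omega m =
     (if m = 0 then 1
      else if (\<exists>j::nat. j \<ge> 1 \<and> (2 * m = 3 * int j ^ 2 + int j \<or> 2 * m = 3 * int j ^ 2 - int j))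
      then (-1) ^ (THE j::nat. j \<ge> 1 \<and> (2 * m = 3 * int j ^ 2 + int j \<or> 2 * m = 3 * int j ^ 2 - int j))
      else 0)"

text \<open>Omega_m(k) = sum_{j>=0} omega(k - j m). For m >= 1 all terms with j > k vanish
  (their argument is negative), so the sum is taken over j = 0..nat k.\<close>
definition Omega :: "nat \<Rightarrow> int \<Rightarrow> int" where
  "Omega m k = (\<Sum>j = 0..nat k. pent_omega (k - int j * int m))"

end

theory Submission
  imports Defs
begin

(* Grouping the nonempty sets S of divisors of k by g = Gcd S, the sets with Gcd S = g are
   exactly the sets g * T with T a set of divisors of k / g and Gcd T = 1.  Hence
   2^tau(k) - 1 and (tau(k) choose r) are the divisor sums of Phi^tau and Phi^tau_r.  Summing
   a divisor sum against omega(n - k) and exchanging the order of summation collects, for each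
   m, the terms omega(n - k) with m | k <= n, and these add up to Omega_m(n - m). *)

definition coprime_divisor_subsets :: "(nat \<Rightarrow> bool) \<Rightarrow> nat \<Rightarrow> nat set set" where
  "coprime_divisor_subsets P m =
     {T. T \<subseteq> divisors_set m \<and> T \<noteq> {} \<and> gcd (Gcd T) m = 1 \<and> P (card T)}"

lemma Phi_tau_eq_card: "Phi_tau m = card (coprime_divisor_subsets (\<lambda>_. True) m)"
  by (simp add: Phi_tau_def coprime_divisor_subsets_def)

lemma Phi_tau_r_eq_card: "Phi_tau_r r m = card (coprime_divisor_subsets (\<lambda>c. c = r) m)"
  by (simp add: Phi_tau_r_def coprime_divisor_subsets_def)

lemma finite_divisors_set: "k > 0 \<Longrightarrow> finite (divisors_set k)"
  by (simp add: divisors_set_def)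

lemma Gcd_dvd_if_subset_divisors_set:
  assumes "T \<subseteq> divisors_set m" and "T \<noteq> {}"
  shows "Gcd T dvd m"
proof -
  obtain t where "t \<in> T" using assms(2) by blast
  then show ?thesis
    using assms(1) unfolding divisors_set_def by (blast intro: dvd_trans Gcd_dvd)
qed

lemma mem_coprime_divisor_subsets_iff:
  "T \<in> coprime_divisor_subsets P m \<longleftrightarrow>
     T \<subseteq> divisors_set m \<and> T \<noteq> {} \<and> Gcd T = 1 \<and> P (card T)"
proof -
  have "gcd (Gcd T) m = Gcd T" if "T \<subseteq> divisors_set m" and "T \<noteq> {}"
    using Gcd_dvd_if_subset_divisors_set[OF that] by (rule gcd_nat.absorb1)
  then show ?thesis
    unfolding coprime_divisor_subsets_def mem_Collect_eq by metis
qed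

lemma scaled_subset_divisors_set_iff:
  fixes g :: nat
  assumes "g > 0"
  shows "(*) g ` T \<subseteq> divisors_set (g * m) \<longleftrightarrow> T \<subseteq> divisors_set m"
  using assms by (auto simp: divisors_set_def)

lemma divisor_subsets_with_Gcd_eq:
  fixes g m :: nat
  assumes "g > 0"
  shows "{S. S \<subseteq> divisors_set (g * m) \<and> S \<noteq> {} \<and> P (card S) \<and> Gcd S = g}
       = (`) ((*) g) ` coprime_divisor_subsets P m" (is "?L = _")
proof -
  have scaled_mem_iff: "(*) g ` T \<in> ?L \<longleftrightarrow> T \<in> coprime_divisor_subsets P m" for T
  proof -
    have "inj_on ((*) g) T" using assms by (auto simp: inj_on_def)
    then have "card ((*) g ` T) = card T" by (rule card_image)
    moreover have "Gcd ((*) g ` T) = g * Gcd T" by (simp add: Gcd_mult)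
    moreover have "(*) g ` T \<subseteq> divisors_set (g * m) \<longleftrightarrow> T \<subseteq> divisors_set m"
      using assms by (rule scaled_subset_divisors_set_iff)
    ultimately show ?thesis
      using assms by (auto simp: mem_coprime_divisor_subsets_iff)
  qed
  show ?thesis
  proof (intro equalityI subsetI)
    fix S assume S: "S \<in> ?L"
    have "x = g * (x div g)" if "x \<in> S" for x
      using S that Gcd_dvd[OF that] by auto
    then have S_eq: "S = (*) g ` ((\<lambda>x. x div g) ` S)"
      by (auto simp: image_image)
    from S have "(*) g ` ((\<lambda>x. x div g) ` S) \<in> ?L"
      by (subst S_eq[symmetric])
    then have "(\<lambda>x. x div g) ` S \<in> coprime_divisor_subsets P m"
      using scaled_mem_iff by blast
    then show "S \<in> (`) ((*) g) ` coprime_divisor_subsets P m"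
      using S_eq by blast
  next
    fix S assume "S \<in> (`) ((*) g) ` coprime_divisor_subsets P m"
    then show "S \<in> ?L" using scaled_mem_iff by blast
  qed
qed

lemma card_divisor_subsets_eq_sum:
  fixes k :: nat
  assumes "k > 0"
  shows "card {S. S \<subseteq> divisors_set k \<and> S \<noteq> {} \<and> P (card S)}
       = (\<Sum>m\<in>divisors_set k. card (coprime_divisor_subsets P m))"
proof -
  define slice where
    "slice m = {S. S \<subseteq> divisors_set k \<and> S \<noteq> {} \<and> P (card S) \<and> Gcd S = k div m}" for m
  have div_div_cancel: "k div (k div m) = m" if "m dvd k" for m
    using div_div_eq_right[OF that dvd_refl] assms by simp
  have "{S. S \<subseteq> divisors_set k \<and> S \<noteq> {} \<and> P (card S)} = (\<Union>m\<in>divisors_set k. slice m)"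
  proof (intro equalityI subsetI)
    fix S assume S: "S \<in> {S. S \<subseteq> divisors_set k \<and> S \<noteq> {} \<and> P (card S)}"
    then have "Gcd S dvd k" by (auto intro: Gcd_dvd_if_subset_divisors_set)
    then have "k div Gcd S dvd k"
      using dvd_triv_left[of "k div Gcd S" "Gcd S"] dvd_div_mult_self by simp
    then have "k div Gcd S \<in> divisors_set k" and "S \<in> slice (k div Gcd S)"
      using S div_div_cancel[OF \<open>Gcd S dvd k\<close>] by (simp_all add: slice_def divisors_set_def)
    then show "S \<in> (\<Union>m\<in>divisors_set k. slice m)" by blast
  qed (auto simp: slice_def)
  also have "card \<dots> = (\<Sum>m\<in>divisors_set k. card (slice m))"
  proof (rule card_UN_disjoint)
    show "finite (divisors_set k)" using assms by (rule finite_divisors_set)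
    moreover have "slice m \<subseteq> Pow (divisors_set k)" for m by (auto simp: slice_def)
    ultimately show "\<forall>m\<in>divisors_set k. finite (slice m)"
      by (meson finite_Pow_iff finite_subset)
    show "\<forall>i\<in>divisors_set k. \<forall>j\<in>divisors_set k. i \<noteq> j \<longrightarrow> slice i \<inter> slice j = {}"
    proof (intro ballI impI)
      fix i j assume "i \<in> divisors_set k" "j \<in> divisors_set k" "i \<noteq> j"
      then have "k div i \<noteq> k div j"
        using div_div_cancel[of i] div_div_cancel[of j] by (auto simp: divisors_set_def)
      then show "slice i \<inter> slice j = {}" by (auto simp: slice_def)
    qed
  qed
  also have "\<dots> = (\<Sum>m\<in>divisors_set k. card (coprime_divisor_subsets P m))"
  proof (rule sum.cong[OF refl])
    fix m assume "m \<in> divisors_set k"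
    then have "m dvd k" by (simp add: divisors_set_def)
    then have "k div m > 0" and "k div m * m = k" using assms by (auto intro: Nat.gr0I)
    then have "slice m = (`) ((*) (k div m)) ` coprime_divisor_subsets P m"
      using divisor_subsets_with_Gcd_eq[of "k div m" m P] by (simp only: slice_def)
    moreover have "inj_on ((`) ((*) (k div m))) X" for X
      using \<open>k div m > 0\<close> by (simp add: inj_on_def inj_image_eq_iff)
    ultimately show "card (slice m) = card (coprime_divisor_subsets P m)"
      by (simp add: card_image)
  qed
  finally show ?thesis .
qed

lemma two_pow_tau_minus_one_eq_sum_Phi_tau:
  assumes "k > 0"
  shows "2 ^ tau k - 1 = (\<Sum>m\<in>divisors_set k. Phi_tau m)"
proof -
  have "{S. S \<subseteq> divisors_set k \<and> S \<noteq> {}} = Pow (divisors_set k) - {{}}" by auto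
  then show ?thesis
    using card_divisor_subsets_eq_sum[OF assms, of "\<lambda>_. True"] finite_divisors_set[OF assms]
    by (simp add: Phi_tau_eq_card card_Pow tau_def)
qed

lemma tau_choose_eq_sum_Phi_tau_r:
  assumes "k > 0" and "r \<ge> 1"
  shows "tau k choose r = (\<Sum>m\<in>divisors_set k. Phi_tau_r r m)"
proof -
  have "{S. S \<subseteq> divisors_set k \<and> S \<noteq> {} \<and> card S = r}
      = {S. S \<subseteq> divisors_set k \<and> card S = r}"
    using assms(2) by auto
  then show ?thesis
    using card_divisor_subsets_eq_sum[OF assms(1), of "\<lambda>c. c = r"] finite_divisors_set[OF assms(1)]
    by (simp add: Phi_tau_r_eq_card n_subsets tau_def)
qed

lemma sum_divisor_sum_mult_eq_sum_multiples:
  fixes F h :: "nat \<Rightarrow> 'a::comm_semiring_0"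
  shows "(\<Sum>k = 1..n. (\<Sum>m\<in>divisors_set k. F m) * h k)
       = (\<Sum>m = 1..n. F m * (\<Sum>k | k \<in> {1..n} \<and> m dvd k. h k))"
proof -
  have "divisors_set k = {m. m \<in> {1..n} \<and> m dvd k}" if "k \<in> {1..n}" for k
    using that by (auto simp: divisors_set_def dest: dvd_imp_le intro: Nat.gr0I)
  then have "(\<Sum>k = 1..n. (\<Sum>m\<in>divisors_set k. F m) * h k)
           = (\<Sum>k = 1..n. \<Sum>m | m \<in> {1..n} \<and> m dvd k. F m * h k)"
    by (simp add: sum_distrib_right)
  also have "\<dots> = (\<Sum>m = 1..n. \<Sum>k | k \<in> {1..n} \<and> m dvd k. F m * h k)"
    by (rule sum.swap_restrict) simp_all
  also have "\<dots> = (\<Sum>m = 1..n. F m * (\<Sum>k | k \<in> {1..n} \<and> m dvd k. h k))"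
    by (simp add: sum_distrib_left)
  finally show ?thesis .
qed

lemma sum_multiples_eq_sum_shifts:
  fixes f :: "int \<Rightarrow> 'a::comm_monoid_add" and m n :: nat
  assumes f_neg: "\<And>x. x < 0 \<Longrightarrow> f x = 0" and "m \<ge> 1"
  shows "(\<Sum>k | k \<in> {1..n} \<and> m dvd k. f (int n - int k))
       = (\<Sum>j = 0..n - m. f (int n - int m - int j * int m))"
proof -
  have shift: "int n - int m - int j * int m = int n - int ((j + 1) * m)" for j
    by (simp add: algebra_simps)
  have "(\<Sum>j = 0..n - m. f (int n - int m - int j * int m))
      = (\<Sum>j = 0..n - m. f (int n - int ((j + 1) * m)))"
    by (simp only: shift)
  also have "\<dots> = (\<Sum>j | j \<in> {0..n - m} \<and> (j + 1) * m \<le> n. f (int n - int ((j + 1) * m)))"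
  proof (rule sum.mono_neutral_right)
    show "\<forall>j\<in>{0..n - m} - {j. j \<in> {0..n - m} \<and> (j + 1) * m \<le> n}.
            f (int n - int ((j + 1) * m)) = 0"
    proof
      fix j assume "j \<in> {0..n - m} - {j. j \<in> {0..n - m} \<and> (j + 1) * m \<le> n}"
      then have "n < (j + 1) * m" by auto
      then show "f (int n - int ((j + 1) * m)) = 0" by (intro f_neg) linarith
    qed
  qed auto
  also have "\<dots> = (\<Sum>k | k \<in> {1..n} \<and> m dvd k. f (int n - int k))"
  proof (rule sum.reindex_bij_witness[of _ "\<lambda>k. k div m - 1" "\<lambda>j. (j + 1) * m"])
    fix k assume "k \<in> {k. k \<in> {1..n} \<and> m dvd k}"
    then obtain q where k: "k = q * m" "1 \<le> k" "k \<le> n"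
      by (auto simp: dvd_def mult.commute)
    then have "q \<ge> 1" by (cases q) auto
    have k_div: "k div m = q" using k \<open>m \<ge> 1\<close> by simp
    have k_eq: "(q - 1 + 1) * m = k" using k \<open>q \<ge> 1\<close> by simp
    then show "(k div m - 1 + 1) * m = k" by (simp only: k_div)
    have "q - 1 \<le> (q - 1) * m" using \<open>m \<ge> 1\<close> by simp
    also have "\<dots> = k - m" using k by (simp add: diff_mult_distrib)
    finally have "q - 1 \<in> {0..n - m}" using k(3) by simp
    moreover have "(q - 1 + 1) * m \<le> n" using k_eq k(3) by metis
    ultimately show "k div m - 1 \<in> {j. j \<in> {0..n - m} \<and> (j + 1) * m \<le> n}"
      unfolding k_div by blast
  qed (use \<open>m \<ge> 1\<close> in auto)
  finally show ?thesis ..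
qed

lemma pent_omega_neg: "x < 0 \<Longrightarrow> pent_omega x = 0"
proof -
  assume "x < 0"
  have "3 * int j ^ 2 - int j \<ge> 0" for j :: nat
    by (cases j) (auto simp: power2_eq_square)
  then show ?thesis
    using \<open>x < 0\<close> unfolding pent_omega_def
    by (smt (verit) zero_le_power2 of_nat_0_le_iff)
qed

lemma Omega_eq_sum_multiples:
  assumes "m \<ge> 1"
  shows "Omega m (int n - int m) = (\<Sum>k | k \<in> {1..n} \<and> m dvd k. pent_omega (int n - int k))"
proof -
  have "nat (int n - int m) = n - m" by simp
  then show ?thesis
    unfolding Omega_def using sum_multiples_eq_sum_shifts[of pent_omega, OF pent_omega_neg assms] by simp
qed

lemma sum_mult_pent_omega_eq_sum_Omega:
  fixes a F :: "nat \<Rightarrow> int"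
  assumes "\<And>k. k \<in> {1..n} \<Longrightarrow> a k = (\<Sum>m\<in>divisors_set k. F m)"
  shows "(\<Sum>k = 1..n. a k * pent_omega (int n - int k))
       = (\<Sum>m = 1..n. F m * Omega m (int n - int m))"
proof -
  have "(\<Sum>k = 1..n. a k * pent_omega (int n - int k))
      = (\<Sum>k = 1..n. (\<Sum>m\<in>divisors_set k. F m) * pent_omega (int n - int k))"
    using assms by (intro sum.cong) simp_all
  also have "\<dots> = (\<Sum>m = 1..n. F m * (\<Sum>k | k \<in> {1..n} \<and> m dvd k. pent_omega (int n - int k)))"
    by (rule sum_divisor_sum_mult_eq_sum_multiples)
  also have "\<dots> = (\<Sum>m = 1..n. F m * Omega m (int n - int m))"
    by (intro sum.cong) (simp_all add: Omega_eq_sum_multiples)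
  finally show ?thesis .
qed

theorem mainTheorem15:
  fixes n r :: nat
  assumes "n \<ge> 1" and "r \<ge> 1"
  shows "(\<Sum>k = 1..n. ((2::int) ^ tau k - 1) * pent_omega (int n - int k))
           = (\<Sum>m = 1..n. int (Phi_tau m) * Omega m (int n - int m))
       \<and> (\<Sum>k = 1..n. int (tau k choose r) * pent_omega (int n - int k))
           = (\<Sum>m = 1..n. int (Phi_tau_r r m) * Omega m (int n - int m))"
proof (intro conjI sum_mult_pent_omega_eq_sum_Omega)
  fix k assume "k \<in> {1..n}"
  then have "int (2 ^ tau k - 1) = (\<Sum>m\<in>divisors_set k. int (Phi_tau m))"
    using two_pow_tau_minus_one_eq_sum_Phi_tau[of k] by simp
  then show "(2::int) ^ tau k - 1 = (\<Sum>m\<in>divisors_set k. int (Phi_tau m))" by simp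
next
  fix k assume "k \<in> {1..n}"
  then show "int (tau k choose r) = (\<Sum>m\<in>divisors_set k. int (Phi_tau_r r m))"
    using tau_choose_eq_sum_Phi_tau_r[of k r] assms(2) by simp
qed

end
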